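(* For every $\gamma>0$ there exists a density operator $\varrho$ on ${\cal H}$ with $0<\operatorname{tr}[\varrho H]<\infty$ such that $$\left\|\widetilde\varrho_{-}-\frac{{\cal N}_{-}(\gamma)[\varrho]}{\operatorname{tr}\big[{\cal N}_{-}(\gamma)[\varrho]\big]}\right\|_1\ \ge\ \tfrac12\ln(e-1),$$ and (for every $\gamma>0$) there likewise exists a density operator $\varrho$ with $\operatorname{tr}[\varrho H]<\infty$ such that $$\left\|\widetilde\varrho_{+}-\frac{{\cal N}_{+}(\gamma)[\varrho]}{\operatorname{tr}\big[{\cal N}_{+}(\gamma)[\varrho]\big]}\right\|_1\ \ge\ \tfrac12\ln(e-1).$$
   Context: ${\cal H}$ is a separable Hilbert space with orthonormal (Fock) basis $\{|n\rangle\}_{n=0}^{\infty}$; $a=\sum_{n\ge1}\sqrt{n}\,|n-1\rangle\langle n|$, $a^{\dagger}=\sum_{n\ge0}\sqrt{n+1}\,|n+1\rangle\langle n|$, $H=a^{\dagger}a$. For a density operator $\varrho$, $\operatorname{tr}[\varrho H^k]=\sum_n n^k\langle n|\varrho|n\rangle$. Ideal photon subtraction/addition outputs (defined when $\operatorname{tr}[\varrho H]<\infty$, and for subtraction also $\operatorname{tr}[\varrho H]>0$): $\widetilde\varrho_{-}=a\varrho a^{\dagger}/\operatorname{tr}[a\varrho a^{\dagger}]$, $\widetilde\varrho_{+}=a^{\dagger}\varrho a/\operatorname{tr}[a^{\dagger}\varrho a]$. For $\gamma>0$, the approximate photon subtraction and addition operations are ${\cal N}_{-}(\gamma)[\varrho]=(e^{2\gamma}-1)\,a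 e^{-\gamma H}\varrho e^{-\gamma H}a^{\dagger}$ and ${\cal N}_{+}(\gamma)[\varrho]=(e^{2\gamma}-1)\,e^{-\gamma H}a^{\dagger}\varrho a e^{-\gamma H}$. The trace norm is $\|X\|_1=\operatorname{tr}\sqrt{X^{\dagger}X}$. *)

theory Defs
  imports Complex_Main "HOL-Library.Extended_Real"
begin

text \<open>Operators on the Fock space are represented by their matrix elements
  X m n = <m|X|n> in the Fock basis.\<close>

type_synonym fmat = "nat \<Rightarrow> nat \<Rightarrow> complex"

definition psd_trunc :: "nat \<Rightarrow> fmat \<Rightarrow> bool" where
  "psd_trunc N A \<longleftrightarrow> (\<forall>x :: nat \<Rightarrow> complex.
     Im (\<Sum>i<N. \<Sum>j<N. cnj (x i) * A i j * x j) = 0 \<and>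
     0 \<le> Re (\<Sum>i<N. \<Sum>j<N. cnj (x i) * A i j * x j))"

definition density :: "fmat \<Rightarrow> bool" where
  "density \<rho> \<longleftrightarrow> (\<forall>m n. \<rho> m n = cnj (\<rho> n m)) \<and> (\<forall>N. psd_trunc N \<rho>) \<and>
     (\<lambda>n. \<rho> n n) sums 1"

text \<open>tr[rho H] = sum_n n <n|rho|n>; finiteness and value.\<close>
definition energy_finite :: "fmat \<Rightarrow> bool" where
  "energy_finite \<rho> \<longleftrightarrow> summable (\<lambda>n. real n * Re (\<rho> n n))"

definition energy :: "fmat \<Rightarrow> real" where
  "energy \<rho> = (\<Sum>n. real n * Re (\<rho> n n))"

definition mtrace :: "fmat \<Rightarrow> complex" where
  "mtrace X = (\<Sum>n. X n n)"

text \<open>a X a^dagger and a^dagger X a, entrywise.\<close>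
definition ann_conj :: "fmat \<Rightarrow> fmat" where
  "ann_conj X = (\<lambda>m n. complex_of_real (sqrt (real (Suc m)) * sqrt (real (Suc n))) * X (Suc m) (Suc n))"

definition cre_conj :: "fmat \<Rightarrow> fmat" where
  "cre_conj X = (\<lambda>m n. if m = 0 \<or> n = 0 then 0
      else complex_of_real (sqrt (real m) * sqrt (real n)) * X (m - 1) (n - 1))"

text \<open>exp(-gamma H) X exp(-gamma H).\<close>
definition damp :: "real \<Rightarrow> fmat \<Rightarrow> fmat" where
  "damp \<gamma> X = (\<lambda>m n. complex_of_real (exp (- \<gamma> * real m) * exp (- \<gamma> * real n)) * X m n)"

definition normalize_op :: "fmat \<Rightarrow> fmat" where
  "normalize_op X = (\<lambda>m n. X m n / mtrace X)"

definition rho_minus :: "fmat \<Rightarrow> fmat" where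
  "rho_minus \<rho> = normalize_op (ann_conj \<rho>)"

definition rho_plus :: "fmat \<Rightarrow> fmat" where
  "rho_plus \<rho> = normalize_op (cre_conj \<rho>)"

definition N_minus :: "real \<Rightarrow> fmat \<Rightarrow> fmat" where
  "N_minus \<gamma> \<rho> = (\<lambda>m n. complex_of_real (exp (2 * \<gamma>) - 1) * ann_conj (damp \<gamma> \<rho>) m n)"

definition N_plus :: "real \<Rightarrow> fmat \<Rightarrow> fmat" where
  "N_plus \<gamma> \<rho> = (\<lambda>m n. complex_of_real (exp (2 * \<gamma>) - 1) * damp \<gamma> (cre_conj \<rho>) m n)"

definition mdiff :: "fmat \<Rightarrow> fmat \<Rightarrow> fmat" where
  "mdiff A B = (\<lambda>m n. A m n - B m n)"

definition msqrt :: "nat \<Rightarrow> fmat \<Rightarrow> fmat" where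
  "msqrt N A = (THE S. (\<forall>i j. (N \<le> i \<or> N \<le> j) \<longrightarrow> S i j = 0) \<and> psd_trunc N S \<and>
      (\<forall>i<N. \<forall>j<N. (\<Sum>k<N. S i k * S k j) = A i j))"

definition trnorm_fin :: "nat \<Rightarrow> fmat \<Rightarrow> real" where
  "trnorm_fin N X = Re (\<Sum>i<N. msqrt N (\<lambda>i j. \<Sum>k<N. cnj (X k i) * X k j) i i)"

text \<open>||X||_1 = sup_N ||P_N X P_N||_1 (monotone in N, equals tr sqrt(X^dagger X)).\<close>
definition trace_norm :: "fmat \<Rightarrow> ereal" where
  "trace_norm X = (SUP N. ereal (trnorm_fin N X))"

end

theory Submission
  imports Defs "HOL-Real_Asymp.Real_Asymp"
begin

(* Take for rho the equal mixture of two Fock states: |1> and |k+1> for subtraction, |0> and |k>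
   for addition. Every operator involved is then diagonal. Both ideal outputs give weight 1/(k+2)
   to the lower of their two levels, while the factor exp(-gamma H) multiplies the weight of level n
   by exp(-2 gamma n), so the approximate outputs give that level a weight tending to 1 as k grows.
   The trace norm of a diagonal operator dominates its first nonzero entry, so for large k both
   errors exceed 1/2 > ln(e - 1)/2. *)

lemma double_sum_delta:
  fixes S :: "nat \<Rightarrow> nat \<Rightarrow> 'a::comm_semiring_1"
  assumes "i < N" "j < N"
  shows "(\<Sum>l<N. \<Sum>m<N. (if l = i then a else 0) * S l m * (if m = j then b else 0)) = a * S i j * b"
proof -
  have "(if l = i then a else 0) * S l m * (if m = j then b else 0)
      = (if m = j then (if l = i then a * S i j * b else 0) else 0)" for l m
    by simp
  then show ?thesis using assms by simp
qed

lemma quadratic_form_two_point: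
  fixes S :: fmat
  assumes "i < N" "j < N"
  shows "(\<Sum>l<N. \<Sum>m<N. cnj ((if l = i then \<alpha> else 0) + (if l = j then \<beta> else 0)) * S l m *
            ((if m = i then \<alpha> else 0) + (if m = j then \<beta> else 0)))
       = cnj \<alpha> * \<alpha> * S i i + cnj \<alpha> * \<beta> * S i j + cnj \<beta> * \<alpha> * S j i + cnj \<beta> * \<beta> * S j j"
  using assms by (simp add: ring_distribs sum.distrib if_distrib[of cnj] double_sum_delta cong: if_cong)

lemma psd_trunc_two_point:
  fixes \<alpha> \<beta> :: complex
  assumes psd: "psd_trunc N S" and "i < N" "j < N"
  defines "q \<equiv> cnj \<alpha> * \<alpha> * S i i + cnj \<alpha> * \<beta> * S i j + cnj \<beta> * \<alpha> * S j i + cnj \<beta> * \<beta> * S j j"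
  shows "Im q = 0" "0 \<le> Re q"
  using psd[unfolded psd_trunc_def,
      THEN spec[of _ "\<lambda>l. (if l = i then \<alpha> else 0) + (if l = j then \<beta> else 0)"]]
  unfolding quadratic_form_two_point[OF assms(2,3)] q_def by auto

lemma psd_trunc_diag:
  assumes "psd_trunc N S" "i < N"
  shows "Im (S i i) = 0" "0 \<le> Re (S i i)"
  using psd_trunc_two_point[OF assms assms(2), where \<alpha>=1 and \<beta>=0] by simp_all

lemma psd_trunc_hermitian:
  assumes psd: "psd_trunc N S" and "i < N" "j < N"
  shows "S j i = cnj (S i j)"
proof -
  have "Im (S i i) = 0" "Im (S j j) = 0"
    using psd_trunc_diag(1) psd \<open>i < N\<close> \<open>j < N\<close> by auto
  then have "Im (S i j) + Im (S j i) = 0" "Re (S i j) - Re (S j i) = 0"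
    using psd_trunc_two_point(1)[OF assms, where \<alpha>=1 and \<beta>=1]
      psd_trunc_two_point(1)[OF assms, where \<alpha>=1 and \<beta>=\<i>] by simp_all
  then show ?thesis by (simp add: complex_eq_iff)
qed

lemma psd_trunc_square_diag_eq_0:
  assumes psd: "psd_trunc N S" and "i < N" "(\<Sum>k<N. S i k * S k i) = 0" "k < N"
  shows "S i k = 0"
proof -
  have "(\<Sum>k<N. S i k * S k i) = complex_of_real (\<Sum>k<N. (cmod (S i k))\<^sup>2)"
    unfolding of_real_sum complex_norm_square using psd_trunc_hermitian[OF psd \<open>i < N\<close>] by simp
  with assms(3) have "(\<Sum>k<N. (cmod (S i k))\<^sup>2) = 0" by (simp only: of_real_eq_0_iff)
  with \<open>k < N\<close> show ?thesis by (simp add: sum_nonneg_eq_0_iff)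
qed

definition diag_op :: "(nat \<Rightarrow> real) \<Rightarrow> fmat" where
  "diag_op p = (\<lambda>m n. if m = n then complex_of_real (p m) else 0)"

lemma psd_trunc_diag_op:
  assumes "\<And>n. 0 \<le> p n"
  shows "psd_trunc N (diag_op p)"
proof -
  have "(\<Sum>j<N. cnj (x i) * diag_op p i j * x j) = complex_of_real (p i * (cmod (x i))\<^sup>2)"
    if "i < N" for x i
  proof -
    have "(\<Sum>j<N. cnj (x i) * diag_op p i j * x j) = cnj (x i) * complex_of_real (p i) * x i"
      using that by (simp add: diag_op_def if_distrib[of "\<lambda>y. cnj (x i) * y * _"] cong: if_cong)
    then show ?thesis by (simp only: of_real_mult complex_norm_square) (simp add: mult_ac)
  qed
  then show ?thesis
    unfolding psd_trunc_def using assms by (simp del: of_real_sum add: of_real_sum[symmetric] sum_nonneg)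
qed

lemma msqrt_corner:
  assumes "0 \<le> t"
    and A: "\<And>i j. i \<le> n \<Longrightarrow> j \<le> n \<Longrightarrow> A i j = (if i = n \<and> j = n then complex_of_real t else 0)"
  shows "msqrt (Suc n) A = diag_op (\<lambda>i. if i = n then sqrt t else 0)"
  unfolding msqrt_def
proof (rule the_equality, intro conjI allI impI)
  let ?S = "diag_op (\<lambda>i. if i = n then sqrt t else 0)"
  show "?S i j = 0" if "Suc n \<le> i \<or> Suc n \<le> j" for i j
    using that by (auto simp: diag_op_def)
  show "psd_trunc (Suc n) ?S"
    by (rule psd_trunc_diag_op) (simp add: \<open>0 \<le> t\<close>)
  show "(\<Sum>k<Suc n. ?S i k * ?S k j) = A i j" if "i < Suc n" "j < Suc n" for i j
    using A[of i j] that \<open>0 \<le> t\<close>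
    by (auto simp: diag_op_def if_distrib[of "\<lambda>y. y * _"] simp flip: of_real_mult cong: if_cong)
next
  fix S
  assume S: "(\<forall>i j. Suc n \<le> i \<or> Suc n \<le> j \<longrightarrow> S i j = 0) \<and> psd_trunc (Suc n) S \<and>
    (\<forall>i<Suc n. \<forall>j<Suc n. (\<Sum>k<Suc n. S i k * S k j) = A i j)"
  then have psd: "psd_trunc (Suc n) S" by blast
  \<comment> \<open>S is Hermitian, so (S^2) i i is the sum of the |S i k|^2; it vanishes for i < n.\<close>
  have row: "S i k = 0" if "i < n" "k < Suc n" for i k
    using psd_trunc_square_diag_eq_0[OF psd _ _ that(2)] S A that by auto
  have col: "S k i = 0" if "i < n" "k < Suc n" for i k
    using psd_trunc_hermitian[OF psd, of i k] row that by simp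
  have "S n n * S n n = (\<Sum>k<Suc n. S n k * S k n)"
    using col by simp
  also have "\<dots> = A n n"
    using S by blast
  also have "\<dots> = complex_of_real t"
    using A by simp
  finally have "S n n * S n n = complex_of_real t" .
  moreover have "Im (S n n) = 0" "0 \<le> Re (S n n)"
    using psd_trunc_diag[OF psd, of n] by auto
  ultimately have "S n n = complex_of_real (sqrt t)"
    by (metis complex_eq_iff Im_complex_of_real Re_complex_of_real
        of_real_mult real_sqrt_abs2 abs_of_nonneg)
  moreover have "S i j = 0" if "i \<noteq> n \<or> j \<noteq> n" for i j
  proof (cases "i \<le> n \<and> j \<le> n")
    case True
    then show ?thesis using that row col by fastforce
  next
    case False
    then show ?thesis using S by auto
  qed
  ultimately show "S = diag_op (\<lambda>i. if i = n then sqrt t else 0)"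
    by (auto simp: diag_op_def fun_eq_iff)
qed

lemma trnorm_fin_corner:
  assumes X: "\<And>i j. i \<le> n \<Longrightarrow> j \<le> n \<Longrightarrow> (i, j) \<noteq> (n, n) \<Longrightarrow> X i j = 0"
  shows "trnorm_fin (Suc n) X = cmod (X n n)"
proof -
  have "(\<Sum>k<Suc n. cnj (X k i) * X k j)
      = (if i = n \<and> j = n then complex_of_real ((cmod (X n n))\<^sup>2) else 0)"
    if "i \<le> n" "j \<le> n" for i j
  proof -
    have "(\<Sum>k<Suc n. cnj (X k i) * X k j) = cnj (X n i) * X n j"
      using X that by (simp add: lessThan_Suc)
    then show ?thesis
      using X that complex_norm_square[of "X n n"] by (auto simp: mult.commute)
  qed
  then have "msqrt (Suc n) (\<lambda>i j. \<Sum>k<Suc n. cnj (X k i) * X k j)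
      = diag_op (\<lambda>i. if i = n then sqrt ((cmod (X n n))\<^sup>2) else 0)"
    by (intro msqrt_corner) simp_all
  then show ?thesis
    by (simp add: trnorm_fin_def diag_op_def)
qed

lemma trace_norm_ge_trnorm_fin: "ereal (trnorm_fin N X) \<le> trace_norm X"
  unfolding trace_norm_def by (rule SUP_upper) simp

lemma trace_norm_diag_op_ge:
  assumes "\<And>i. i < n \<Longrightarrow> p i = 0"
  shows "ereal \<bar>p n\<bar> \<le> trace_norm (diag_op p)"
proof -
  have "trnorm_fin (Suc n) (diag_op p) = cmod (diag_op p n n)"
    by (rule trnorm_fin_corner) (auto simp: diag_op_def assms)
  then show ?thesis
    using trace_norm_ge_trnorm_fin[of "Suc n" "diag_op p"] by (simp add: diag_op_def)
qed

lemma density_diag_op: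
  assumes "\<And>n. 0 \<le> p n" "p sums 1"
  shows "density (diag_op p)"
  unfolding density_def
  using psd_trunc_diag_op[OF assms(1)] sums_of_real[OF assms(2), where 'a=complex]
  by (simp add: diag_op_def)

lemma energy_finite_diag_op: "energy_finite (diag_op p) \<longleftrightarrow> summable (\<lambda>n. real n * p n)"
  by (simp add: energy_finite_def diag_op_def)

lemma energy_diag_op: "energy (diag_op p) = (\<Sum>n. real n * p n)"
  by (simp add: energy_def diag_op_def)

lemma ann_conj_diag_op: "ann_conj (diag_op p) = diag_op (\<lambda>n. real (Suc n) * p (Suc n))"
  by (simp add: ann_conj_def diag_op_def fun_eq_iff flip: of_real_mult, simp add: of_real_mult)

lemma cre_conj_diag_op: "cre_conj (diag_op p) = diag_op (\<lambda>n. real n * p (n - 1))"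
  unfolding fun_eq_iff by (auto simp: cre_conj_def diag_op_def)

lemma damp_diag_op: "damp \<gamma> (diag_op p) = diag_op (\<lambda>n. exp (- 2 * \<gamma> * real n) * p n)"
  by (auto simp: damp_def diag_op_def fun_eq_iff simp flip: of_real_mult exp_add)

lemma scale_diag_op: "(\<lambda>m n. complex_of_real c * diag_op p m n) = diag_op (\<lambda>n. c * p n)"
  by (auto simp: diag_op_def fun_eq_iff)

lemma N_minus_diag_op:
  "N_minus \<gamma> (diag_op p)
     = diag_op (\<lambda>n. (exp (2 * \<gamma>) - 1) * (real (Suc n) * (exp (- 2 * \<gamma> * real (Suc n)) * p (Suc n))))"
  unfolding N_minus_def damp_diag_op ann_conj_diag_op scale_diag_op ..

lemma N_plus_diag_op:
  "N_plus \<gamma> (diag_op p)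
     = diag_op (\<lambda>n. (exp (2 * \<gamma>) - 1) * (exp (- 2 * \<gamma> * real n) * (real n * p (n - 1))))"
  unfolding N_plus_def damp_diag_op cre_conj_diag_op scale_diag_op ..

lemma mdiff_diag_op: "mdiff (diag_op p) (diag_op q) = diag_op (\<lambda>n. p n - q n)"
  by (auto simp: mdiff_def diag_op_def fun_eq_iff)

lemma normalize_op_diag_op:
  assumes "p sums s"
  shows "normalize_op (diag_op p) = diag_op (\<lambda>n. p n / s)"
proof -
  have "mtrace (diag_op p) = complex_of_real s"
    using sums_of_real[OF assms, where 'a=complex] by (simp add: mtrace_def diag_op_def sums_iff)
  then show ?thesis by (auto simp: normalize_op_def diag_op_def fun_eq_iff)
qed

lemma sums_two_point:
  fixes f :: "nat \<Rightarrow> real"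
  assumes "a \<noteq> b" "\<And>n. n \<noteq> a \<Longrightarrow> n \<noteq> b \<Longrightarrow> f n = 0"
  shows "f sums (f a + f b)"
  using sums_finite[of "{a, b}" f] assms by auto

lemma trace_norm_normalized_two_point_diff_ge:
  assumes "a < b"
    and p: "\<And>n. n \<noteq> a \<Longrightarrow> n \<noteq> b \<Longrightarrow> p n = 0"
    and q: "\<And>n. n \<noteq> a \<Longrightarrow> n \<noteq> b \<Longrightarrow> q n = 0"
  shows "ereal \<bar>p a / (p a + p b) - q a / (q a + q b)\<bar>
           \<le> trace_norm (mdiff (normalize_op (diag_op p)) (normalize_op (diag_op q)))"
proof -
  have "a \<noteq> b" using \<open>a < b\<close> by simp
  then have "mdiff (normalize_op (diag_op p)) (normalize_op (diag_op q))
      = diag_op (\<lambda>n. p n / (p a + p b) - q n / (q a + q b))"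
    using normalize_op_diag_op[OF sums_two_point[of a b p]]
      normalize_op_diag_op[OF sums_two_point[of a b q]]
    by (simp add: p q mdiff_diag_op)
  moreover have "p i / (p a + p b) - q i / (q a + q b) = 0" if "i < a" for i
    using that \<open>a < b\<close> p q by simp
  ultimately show ?thesis
    using trace_norm_diag_op_ge[of a "\<lambda>n. p n / (p a + p b) - q n / (q a + q b)"] by simp
qed

definition equal_mixture :: "nat \<Rightarrow> nat \<Rightarrow> nat \<Rightarrow> real" where
  "equal_mixture a b n = (if n = a \<or> n = b then 1 / 2 else 0)"

lemma density_equal_mixture:
  assumes "a \<noteq> b"
  shows "density (diag_op (equal_mixture a b))"
proof (rule density_diag_op)
  show "equal_mixture a b sums 1"
    using sums_two_point[OF assms, of "equal_mixture a b"] assms by (simp add: equal_mixture_def)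
qed (simp add: equal_mixture_def)

lemma energy_equal_mixture:
  assumes "a \<noteq> b"
  shows "energy_finite (diag_op (equal_mixture a b))"
    and "energy (diag_op (equal_mixture a b)) = (real a + real b) / 2"
  using sums_two_point[OF assms, of "\<lambda>n. real n * equal_mixture a b n"] assms
  by (simp_all add: energy_finite_diag_op energy_diag_op sums_iff equal_mixture_def add_divide_distrib)

(* The weights the approximate operations give to the two output levels are proportional to
   exp(-2 gamma) and (k+1) exp(-2 gamma (k+1)); the ideal ones are proportional to 1 and k+1. *)
definition damped_low_share :: "real \<Rightarrow> nat \<Rightarrow> real" where
  "damped_low_share \<gamma> k =
     exp (- 2 * \<gamma>) / (exp (- 2 * \<gamma>) + real (Suc k) * exp (- 2 * \<gamma> * real (Suc k)))"

lemma eventually_damped_low_share_gap: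
  assumes "\<gamma> > 0"
  shows "eventually (\<lambda>k. 1 / 2 \<le> damped_low_share \<gamma> k - 1 / (real k + 2)) at_top"
proof -
  have "((\<lambda>k. damped_low_share \<gamma> k - 1 / (real k + 2)) \<longlongrightarrow> 1) at_top"
    unfolding damped_low_share_def using assms by real_asymp
  then have "eventually (\<lambda>k. 1 / 2 < damped_low_share \<gamma> k - 1 / (real k + 2)) at_top"
    by (rule order_tendstoD) simp
  then show ?thesis by (rule eventually_mono) simp
qed

lemma trace_norm_subtraction_error_ge:
  assumes "\<gamma> \<noteq> 0" "k \<noteq> 0"
  defines "\<rho> \<equiv> diag_op (equal_mixture 1 (Suc k))"
  shows "ereal \<bar>1 / (real k + 2) - damped_low_share \<gamma> k\<bar>
           \<le> trace_norm (mdiff (rho_minus \<rho>) (normalize_op (N_minus \<gamma> \<rho>)))"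
proof -
  define p where "p n = real (Suc n) * equal_mixture 1 (Suc k) (Suc n)" for n
  define c where "c = exp (2 * \<gamma>) - 1"
  have "c \<noteq> 0" using assms by (simp add: c_def)
  define q where "q n = c *
    (real (Suc n) * (exp (- 2 * \<gamma> * real (Suc n)) * equal_mixture 1 (Suc k) (Suc n)))" for n
  have "rho_minus \<rho> = normalize_op (diag_op p)" "N_minus \<gamma> \<rho> = diag_op q"
    by (simp_all add: \<rho>_def rho_minus_def ann_conj_diag_op N_minus_diag_op
        p_def[abs_def] q_def[abs_def] c_def)
  moreover have "ereal \<bar>p 0 / (p 0 + p k) - q 0 / (q 0 + q k)\<bar>
      \<le> trace_norm (mdiff (normalize_op (diag_op p)) (normalize_op (diag_op q)))"
    by (rule trace_norm_normalized_two_point_diff_ge)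
      (use assms in \<open>auto simp: p_def q_def equal_mixture_def\<close>)
  moreover have "p 0 / (p 0 + p k) = 1 / (real k + 2)"
    using assms by (simp add: p_def equal_mixture_def field_simps)
  moreover have "q 0 / (q 0 + q k) = damped_low_share \<gamma> k"
  proof -
    have "q 0 = c / 2 * exp (- 2 * \<gamma>)"
      and "q k = c / 2 * (real (Suc k) * exp (- 2 * \<gamma> * real (Suc k)))"
      using assms by (simp_all add: q_def equal_mixture_def)
    then show ?thesis
      unfolding damped_low_share_def using \<open>c \<noteq> 0\<close> by (simp only: flip: distrib_left) simp
  qed
  ultimately show ?thesis by simp
qed

lemma trace_norm_addition_error_ge:
  assumes "\<gamma> \<noteq> 0" "k \<noteq> 0"
  defines "\<rho> \<equiv> diag_op (equal_mixture 0 k)"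
  shows "ereal \<bar>1 / (real k + 2) - damped_low_share \<gamma> k\<bar>
           \<le> trace_norm (mdiff (rho_plus \<rho>) (normalize_op (N_plus \<gamma> \<rho>)))"
proof -
  define p where "p n = real n * equal_mixture 0 k (n - 1)" for n
  define c where "c = exp (2 * \<gamma>) - 1"
  have "c \<noteq> 0" using assms by (simp add: c_def)
  define q where "q n = c *
    (exp (- 2 * \<gamma> * real n) * (real n * equal_mixture 0 k (n - 1)))" for n
  have "rho_plus \<rho> = normalize_op (diag_op p)" "N_plus \<gamma> \<rho> = diag_op q"
    by (simp_all add: \<rho>_def rho_plus_def cre_conj_diag_op N_plus_diag_op
        p_def[abs_def] q_def[abs_def] c_def)
  moreover have "ereal \<bar>p 1 / (p 1 + p (Suc k)) - q 1 / (q 1 + q (Suc k))\<bar>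
      \<le> trace_norm (mdiff (normalize_op (diag_op p)) (normalize_op (diag_op q)))"
    by (rule trace_norm_normalized_two_point_diff_ge)
      (use assms in \<open>auto simp: p_def q_def equal_mixture_def\<close>)
  moreover have "p 1 / (p 1 + p (Suc k)) = 1 / (real k + 2)"
    using assms by (simp add: p_def equal_mixture_def field_simps)
  moreover have "q 1 / (q 1 + q (Suc k)) = damped_low_share \<gamma> k"
  proof -
    have "q 1 = c / 2 * exp (- 2 * \<gamma>)"
      and "q (Suc k) = c / 2 * (real (Suc k) * exp (- 2 * \<gamma> * real (Suc k)))"
      using assms by (simp_all add: q_def equal_mixture_def)
    then show ?thesis
      unfolding damped_low_share_def using \<open>c \<noteq> 0\<close> by (simp only: flip: distrib_left) simp
  qed
  ultimately show ?thesis by simp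
qed

theorem proposition1:
  fixes \<gamma> :: real
  assumes "\<gamma> > 0"
  shows "(\<exists>\<rho>. density \<rho> \<and> energy_finite \<rho> \<and> 0 < energy \<rho> \<and>
            trace_norm (mdiff (rho_minus \<rho>) (normalize_op (N_minus \<gamma> \<rho>)))
              \<ge> ereal (ln (exp 1 - 1) / 2))
       \<and> (\<exists>\<rho>. density \<rho> \<and> energy_finite \<rho> \<and>
            trace_norm (mdiff (rho_plus \<rho>) (normalize_op (N_plus \<gamma> \<rho>)))
              \<ge> ereal (ln (exp 1 - 1) / 2))"
proof -
  obtain k :: nat where "k \<noteq> 0" and gap: "1 / 2 \<le> damped_low_share \<gamma> k - 1 / (real k + 2)"
    using eventually_conj[OF eventually_gt_at_top[of 0] eventually_damped_low_share_gap[OF assms]]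
    unfolding eventually_at_top_linorder by blast
  have "ln (exp 1 - 1) \<le> exp 1 - (2 :: real)"
    using ln_le_minus_one[of "exp 1 - 1"] by simp
  then have bound: "ereal (ln (exp 1 - 1) / 2) \<le> ereal \<bar>1 / (real k + 2) - damped_low_share \<gamma> k\<bar>"
    using gap exp_le by simp
  have "\<gamma> \<noteq> 0" "1 \<noteq> Suc k" "0 \<noteq> k" using assms \<open>k \<noteq> 0\<close> by simp_all
  let ?\<rho>m = "diag_op (equal_mixture 1 (Suc k))" and ?\<rho>p = "diag_op (equal_mixture 0 k)"
  have "density ?\<rho>m \<and> energy_finite ?\<rho>m \<and> 0 < energy ?\<rho>m \<and>
      trace_norm (mdiff (rho_minus ?\<rho>m) (normalize_op (N_minus \<gamma> ?\<rho>m))) \<ge> ereal (ln (exp 1 - 1) / 2)"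
    using density_equal_mixture[OF \<open>1 \<noteq> Suc k\<close>] energy_equal_mixture[OF \<open>1 \<noteq> Suc k\<close>]
      order_trans[OF bound trace_norm_subtraction_error_ge[OF \<open>\<gamma> \<noteq> 0\<close> \<open>k \<noteq> 0\<close>]] by simp
  moreover have "density ?\<rho>p \<and> energy_finite ?\<rho>p \<and>
      trace_norm (mdiff (rho_plus ?\<rho>p) (normalize_op (N_plus \<gamma> ?\<rho>p))) \<ge> ereal (ln (exp 1 - 1) / 2)"
    using density_equal_mixture[OF \<open>0 \<noteq> k\<close>] energy_equal_mixture[OF \<open>0 \<noteq> k\<close>]
      order_trans[OF bound trace_norm_addition_error_ge[OF \<open>\<gamma> \<noteq> 0\<close> \<open>k \<noteq> 0\<close>]] by simp
  ultimately show ?thesis by blast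
qed

end
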